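(* Let $A,B,C,D$ be integers with $A>0$ odd and square-free, $B,C>0$, $D=B^2+C^2$ square-free, and $\gcd(A,D)=1$, and let $K=\mathbb{Q}\big(\sqrt{A(D+B\sqrt{D})}\big)$ (a totally real cyclic quartic field). Then \[ \tfrac{1}{48}\, A\sqrt{D} \le M(\mathcal{O}_K). \]
   Context: For a nonconstant polynomial $f(x)=c\prod_{i=1}^d (x-\alpha_i)\in\mathbb{C}[x]$, the Mahler measure is $M(f)=|c|\prod_{|\alpha_i|\ge 1}|\alpha_i|$. For an algebraic number $\alpha$, $M(\alpha)$ is the Mahler measure of its minimal polynomial over $\mathbb{Z}$ (with content $1$). For a number field $K$ with ring of integers $\mathcal{O}_K$, $M(\mathcal{O}_K)=\min\{M(\alpha):\alpha\in\mathcal{O}_K,\ \mathbb{Q}(\alpha)=K\}$. Every cyclic quartic field can be written uniquely as $\mathbb{Q}(\sqrt{A(D+B\sqrt{D})})$ with $A,B,C,D$ as in the claim (without the sign condition on $A$); it is totally real iff $A>0$. *)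

theory Defs
  imports "HOL-Computational_Algebra.Computational_Algebra" "Berlekamp_Zassenhaus.Mahler_Measure"
begin

definition is_subfield_C :: "complex set \<Rightarrow> bool" where
  "is_subfield_C S \<longleftrightarrow> 0 \<in> S \<and> 1 \<in> S \<and>
     (\<forall>x\<in>S. \<forall>y\<in>S. x + y \<in> S \<and> x * y \<in> S) \<and>
     (\<forall>x\<in>S. - x \<in> S \<and> inverse x \<in> S)"

definition gen_field :: "complex \<Rightarrow> complex set" where
  "gen_field a = \<Inter>{S. is_subfield_C S \<and> a \<in> S}"

definition ring_of_integers :: "complex set \<Rightarrow> complex set" where
  "ring_of_integers F = {x \<in> F. algebraic_int x}"

text \<open>Minimal polynomial over Z (content 1, positive leading coefficient).\<close>
definition min_int_poly :: "complex \<Rightarrow> int poly" where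
  "min_int_poly a = (THE p. irreducible p \<and> poly (map_poly of_int p) a = 0 \<and> lead_coeff p > 0)"

definition mahler_measure_alg :: "complex \<Rightarrow> real" where
  "mahler_measure_alg a = mahler_measure (min_int_poly a)"

text \<open>M(O_K) = min of M(alpha) over alpha in O_K with Q(alpha) = K (taken as Inf; the minimum is attained).\<close>
definition mahler_measure_OK :: "complex set \<Rightarrow> real" where
  "mahler_measure_OK F = Inf {mahler_measure_alg a | a. a \<in> ring_of_integers F \<and> gen_field a = F}"

end

(*
  Write s = sqrt D, T = sqrt (A (D + B s)) and T' = sqrt (A (D - B s)); then T T' = A C s and
  1, s, T, T' is a Q-basis of K = Q(T).  An integral generator a = x + y s + z T + w T' of K has
  (z, w) <> (0, 0), since otherwise it would lie in Q(s).  The Galois group is generated by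
  sigma: s -> -s, T -> T', T' -> -T, so a, sigma a, sigma^2 a, sigma^3 a are four distinct roots of
  the minimal polynomial of a, and M(a) is at least the product of max 1 |sigma^k a|.
  The differences t = a - sigma^2 a = Z T + W T' and t' = sigma a - sigma^3 a = -W T + Z T'
  (Z = 2 z, W = 2 w) satisfy t^2 + t'^2 = 2 A D (Z^2 + W^2) and t t' = A q s with
  q = C (Z^2 - W^2) - 2 B Z W.  Both numbers t^2 + t'^2 and (t t')^2 are rational algebraic integers,
  hence integers, and the arithmetic hypotheses on A and D force q to be a nonzero integer.
  So A s <= |t| |t'| <= 4 M(a), using |u - v| <= 2 max 1 |u| * max 1 |v|.
*)

theory Submission
  imports Defs "Jordan_Normal_Form.Char_Poly" "Berlekamp_Zassenhaus.Factor_Bound" "HOL-Library.Product_Plus"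
begin

section \<open>Algebraic integers and finitely generated \<open>\<int>\<close>-modules\<close>

inductive_set int_span :: "'a::comm_ring_1 set \<Rightarrow> 'a set" for S where
  zero: "0 \<in> int_span S"
| base: "s \<in> S \<Longrightarrow> s \<in> int_span S"
| add: "a \<in> int_span S \<Longrightarrow> b \<in> int_span S \<Longrightarrow> a + b \<in> int_span S"
| uminus: "a \<in> int_span S \<Longrightarrow> - a \<in> int_span S"

lemma int_span_subset_int_span:
  assumes "S \<subseteq> int_span T" and "a \<in> int_span S"
  shows "a \<in> int_span T"
  using assms(2) by induction (use assms(1) in \<open>auto intro: int_span.intros\<close>)

lemma int_span_mult:
  assumes "a \<in> int_span S" and "b \<in> int_span S'"
  shows "a * b \<in> int_span {s * s' |s s'. s \<in> S \<and> s' \<in> S'}"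
  using assms(1)
proof induction
  case (base s)
  from assms(2) show ?case
  proof induction
    case (base s')
    then show ?case using \<open>s \<in> S\<close> by (intro int_span.base) blast
  qed (auto intro: int_span.intros simp: distrib_left)
qed (auto intro: int_span.intros simp: distrib_right)

lemma int_span_of_int_mult:
  assumes "a \<in> int_span S"
  shows "of_int c * a \<in> int_span S"
proof (induction c rule: int_induct[where k = 0])
  case (step1 i)
  then show ?case using assms by (auto intro: int_span.add simp: distrib_right)
next
  case (step2 i)
  then show ?case using assms
    by (auto dest: int_span.add[OF _ int_span.uminus] simp: algebra_simps)
qed (auto intro: int_span.zero)

lemma int_span_sum:
  assumes "\<And>i. i \<in> I \<Longrightarrow> f i \<in> int_span S"
  shows "sum f I \<in> int_span S"
  using assms by (induction I rule: infinite_finite_induct) (auto intro: int_span.intros)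

lemma int_span_of_finite:
  fixes N :: nat
  assumes "a \<in> int_span (v ` {..<N})"
  obtains c where "a = (\<Sum>j<N. of_int (c j) * v j)"
proof -
  from assms have "\<exists>c. a = (\<Sum>j<N. of_int (c j) * v j)"
  proof induction
    case zero
    show ?case by (rule exI[of _ "\<lambda>_. 0"]) simp
  next
    case (base s)
    then obtain k where "k < N" "s = v k" by auto
    then have "s = (\<Sum>j<N. if j = k then v j else 0)" by (subst sum.delta) auto
    also have "\<dots> = (\<Sum>j<N. of_int (if j = k then 1 else 0) * v j)"
      by (rule sum.cong) auto
    finally show ?case by (intro exI[of _ "\<lambda>j. if j = k then 1 else 0"])
  next
    case (add a b)
    then obtain c d where "a = (\<Sum>j<N. of_int (c j) * v j)" "b = (\<Sum>j<N. of_int (d j) * v j)"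
      by blast
    then show ?case
      by (intro exI[of _ "\<lambda>j. c j + d j"]) (simp add: sum.distrib distrib_right)
  next
    case (uminus a)
    then obtain c where "a = (\<Sum>j<N. of_int (c j) * v j)" by blast
    then show ?case by (intro exI[of _ "\<lambda>j. - c j"]) (simp add: sum_negf)
  qed
  then show ?thesis using that by blast
qed

lemma int_span_subset_zero:
  assumes "a \<in> int_span S" and "S \<subseteq> {0}"
  shows "a = 0"
  using assms by induction auto

text \<open>\<open>lam\<close> is an eigenvalue of the integer matrix of multiplication by \<open>lam\<close> on an enumeration of \<open>S\<close>.\<close>

lemma algebraic_int_if_mult_int_span:
  fixes lam :: "'a::field_char_0"
  assumes "finite S" and "s\<^sub>0 \<in> S" and "s\<^sub>0 \<noteq> 0" and "\<And>s. s \<in> S \<Longrightarrow> lam * s \<in> int_span S"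
  shows "algebraic_int lam"
proof -
  obtain N :: nat and v where S: "S = v ` {..<N}"
    using finite_imp_nat_seg_image_inj_on[OF assms(1)] unfolding lessThan_def[symmetric] by blast
  have "\<forall>i. \<exists>c. i < N \<longrightarrow> lam * v i = (\<Sum>j<N. of_int (c j) * v j)"
    using assms(4) int_span_of_finite unfolding S by (metis image_eqI lessThan_iff)
  then obtain M where M: "\<And>i. i < N \<Longrightarrow> lam * v i = (\<Sum>j<N. of_int (M i j) * v j)"
    by metis
  define Mi where "Mi = mat N N (\<lambda>(i, j). M i j)"
  define Ma where "Ma = map_mat (of_int :: int \<Rightarrow> 'a) Mi"
  have Mi: "Mi \<in> carrier_mat N N" by (simp add: Mi_def)
  have "eigenvector Ma (vec N v) lam"
    unfolding eigenvector_def
  proof (intro conjI)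
    show "vec N v \<noteq> 0\<^sub>v (dim_row Ma)"
      using assms(2,3) by (auto simp: S Ma_def Mi_def vec_eq_iff)
    show "Ma *\<^sub>v vec N v = lam \<cdot>\<^sub>v vec N v"
      by (rule eq_vecI) (auto simp: Ma_def Mi_def scalar_prod_def M lessThan_atLeast0)
  qed (simp add: Ma_def Mi_def)
  then have "poly (char_poly Ma) lam = 0"
    using eigenvalue_root_char_poly[of Ma N] Mi by (auto simp: Ma_def eigenvalue_def)
  moreover have "char_poly Ma = of_int_poly (char_poly Mi)"
    unfolding Ma_def by (rule of_int_hom.char_poly_hom[OF Mi])
  moreover have "lead_coeff (char_poly Mi) = 1"
    using degree_monic_char_poly[OF Mi] by simp
  ultimately show ?thesis
    unfolding algebraic_int_altdef_ipoly by (intro exI[of _ "char_poly Mi"]) simp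
qed

lemma algebraic_int_if_in_int_span_ring:
  fixes lam :: "'a::field_char_0"
  assumes "finite S" and "1 \<in> int_span S" and "\<And>a b. a \<in> S \<Longrightarrow> b \<in> S \<Longrightarrow> a * b \<in> int_span S"
    and "lam \<in> int_span S"
  shows "algebraic_int lam"
proof -
  obtain s\<^sub>0 where "s\<^sub>0 \<in> S" "s\<^sub>0 \<noteq> 0"
    using int_span_subset_zero[OF assms(2)] by force
  moreover have "lam * s \<in> int_span S" if "s \<in> S" for s
    using int_span_mult[OF assms(4) int_span.base[OF that]]
    by (rule int_span_subset_int_span[rotated]) (use assms(3) in auto)
  ultimately show ?thesis using algebraic_int_if_mult_int_span[OF assms(1)] by blast
qed

lemma int_span_powers:
  fixes x :: "'a::comm_ring_1" and m :: nat
  defines "P \<equiv> (\<lambda>l. x ^ l) ` {..<m}"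
  assumes xm: "x ^ m \<in> int_span P"
  shows "x ^ k \<in> int_span P"
proof (induction k)
  case 0
  show ?case
  proof (cases m)
    case (Suc m')
    then have "1 \<in> P"
      unfolding P_def image_iff by (intro bexI[of _ 0]) auto
    then show ?thesis by (simp add: int_span.base)
  qed (use xm in simp)
next
  case (Suc k)
  have "x * p \<in> int_span P" if "p \<in> P" for p
  proof -
    obtain l where l: "l < m" "p = x ^ l"
      using \<open>p \<in> P\<close> by (auto simp: P_def)
    show ?thesis
    proof (cases "Suc l < m")
      case True
      then have "x ^ Suc l \<in> P" unfolding P_def by (intro imageI) simp
      then show ?thesis using l by (simp add: int_span.base)
    next
      case False
      then have "m = Suc l" using l by simp
      then show ?thesis using xm l by simp
    qed
  qed
  moreover have "x * x ^ k \<in> int_span {a * p |a p. a \<in> {x} \<and> p \<in> P}"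
    using int_span_mult[OF int_span.base Suc.IH] by blast
  ultimately show ?case
    using int_span_subset_int_span[of "{x * p |p. p \<in> P}" P] by auto
qed

lemma algebraic_int_powers_in_int_span:
  fixes x :: "'a::field_char_0"
  assumes "algebraic_int x"
  obtains m where "\<And>k. x ^ k \<in> int_span ((\<lambda>l. x ^ l) ` {..<m})"
proof -
  from assms obtain p where p: "poly (of_int_poly p) x = 0" "lead_coeff p = 1"
    unfolding algebraic_int_altdef_ipoly by blast
  define m where "m = degree p"
  have "0 = (\<Sum>l\<le>m. of_int (poly.coeff p l) * x ^ l)"
    using p(1) by (simp add: poly_altdef m_def)
  also have "\<dots> = (\<Sum>l<m. of_int (poly.coeff p l) * x ^ l) + x ^ m"
    using p(2) by (simp add: m_def lessThan_Suc_atMost[symmetric])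
  finally have "x ^ m = (\<Sum>l<m. of_int (- poly.coeff p l) * x ^ l)"
    by (simp add: sum_negf eq_neg_iff_add_eq_0 add.commute)
  then have "x ^ m \<in> int_span ((\<lambda>l. x ^ l) ` {..<m})"
    by (simp only:) (intro int_span_sum int_span_of_int_mult int_span.base; simp)
  then show ?thesis
    using that int_span_powers by blast
qed

lemma algebraic_int_if_in_int_span_monomials:
  fixes x y z :: "'a::field_char_0"
  assumes "algebraic_int x" and "algebraic_int y"
    and "z \<in> int_span (range (\<lambda>(i, j). x ^ i * y ^ j))"
  shows "algebraic_int z"
proof -
  obtain m where m: "\<And>i. x ^ i \<in> int_span ((\<lambda>l. x ^ l) ` {..<m})"
    using algebraic_int_powers_in_int_span[OF assms(1)] by blast
  obtain n where n: "\<And>j. y ^ j \<in> int_span ((\<lambda>l. y ^ l) ` {..<n})"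
    using algebraic_int_powers_in_int_span[OF assms(2)] by blast
  define S where "S = {a * b |a b. a \<in> (\<lambda>l. x ^ l) ` {..<m} \<and> b \<in> (\<lambda>l. y ^ l) ` {..<n}}"
  have monomials: "x ^ i * y ^ j \<in> int_span S" for i j
    unfolding S_def by (rule int_span_mult[OF m n])
  have S_monomials: "\<exists>i j. a = x ^ i * y ^ j" if "a \<in> S" for a
    using that by (auto simp: S_def)
  show ?thesis
  proof (rule algebraic_int_if_in_int_span_ring)
    show "finite S" unfolding S_def by (intro finite_image_set2) auto
    show "1 \<in> int_span S" using monomials[of 0 0] by simp
    show "a * b \<in> int_span S" if ab: "a \<in> S" "b \<in> S" for a b
    proof -
      obtain i j k l where "a = x ^ i * y ^ j" "b = x ^ k * y ^ l"
        using S_monomials[OF ab(1)] S_monomials[OF ab(2)] by blast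
      then have "a * b = x ^ (i + k) * y ^ (j + l)" by (simp add: power_add mult_ac)
      then show ?thesis using monomials by simp
    qed
    show "z \<in> int_span S"
      using assms(3) by (rule int_span_subset_int_span[rotated]) (auto intro: monomials)
  qed
qed

lemma algebraic_int_plus:
  fixes x y :: "'a::field_char_0"
  assumes "algebraic_int x" and "algebraic_int y"
  shows "algebraic_int (x + y)"
proof (rule algebraic_int_if_in_int_span_monomials[OF assms])
  have "(\<lambda>(i, j). x ^ i * y ^ j) (1, 0) + (\<lambda>(i, j). x ^ i * y ^ j) (0, 1)
    \<in> int_span (range (\<lambda>(i, j). x ^ i * y ^ j))"
    by (intro int_span.add int_span.base rangeI)
  then show "x + y \<in> int_span (range (\<lambda>(i, j). x ^ i * y ^ j))" by simp
qed

lemma algebraic_int_times: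
  fixes x y :: "'a::field_char_0"
  assumes "algebraic_int x" and "algebraic_int y"
  shows "algebraic_int (x * y)"
proof (rule algebraic_int_if_in_int_span_monomials[OF assms])
  have "(\<lambda>(i, j). x ^ i * y ^ j) (1, 1) \<in> int_span (range (\<lambda>(i, j). x ^ i * y ^ j))"
    by (intro int_span.base rangeI)
  then show "x * y \<in> int_span (range (\<lambda>(i, j). x ^ i * y ^ j))" by simp
qed

lemma algebraic_int_diff:
  fixes x y :: "'a::field_char_0"
  assumes "algebraic_int x" and "algebraic_int y"
  shows "algebraic_int (x - y)"
  using algebraic_int_plus[OF assms(1) algebraic_int_minus[OF assms(2)]] by simp

lemma poly_of_int_poly_of_real:
  "poly (of_int_poly p) (of_real x :: 'a::{real_algebra_1,comm_ring_1}) = of_real (poly (of_int_poly p) x)"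
  by (simp add: poly_altdef degree_map_poly coeff_map_poly)

lemma Ints_if_algebraic_int_of_rat:
  assumes "algebraic_int (of_rat r :: 'a::field_char_0)"
  shows "r \<in> \<int>"
proof -
  have "(of_rat r :: 'a) \<in> \<int>"
    using rational_algebraic_int_is_int[OF assms] by simp
  then obtain k where "(of_rat r :: 'a) = of_int k"
    by (auto elim: Ints_cases)
  then have "r = of_int k"
    by (metis of_rat_eq_iff of_rat_of_int_eq)
  then show ?thesis by simp
qed

section \<open>Minimal polynomials and Mahler measure\<close>

lemma gcd_int_poly_common_root:
  fixes p q :: "int poly" and a :: complex
  assumes "poly (of_int_poly p) a = 0" and "poly (of_int_poly q) a = 0"
  shows "poly (of_int_poly (gcd p q)) a = 0"
proof (cases "gcd p q = 0")
  case False
  interpret of_rat_poly: map_poly_comm_ring_hom "of_rat :: rat \<Rightarrow> complex" ..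
  have of_rat_of_int_poly: "map_poly (of_rat :: rat \<Rightarrow> complex) (of_int_poly f) = of_int_poly f" for f
    by (subst map_poly_map_poly) (auto simp: o_def)
  define P where "P = (of_int_poly p :: rat poly)"
  define Q where "Q = (of_int_poly q :: rat poly)"
  have "poly (map_poly of_rat (gcd P Q)) a = 0"
    unfolding bezout_coefficients_fst_snd[of P Q, symmetric]
    using assms by (simp add: P_def Q_def of_rat_poly.hom_add of_rat_poly.hom_mult of_rat_of_int_poly)
  then have "of_rat (inverse (of_int (lead_coeff (gcd p q)))) * poly (of_int_poly (gcd p q)) a = (0 :: complex)"
    unfolding P_def Q_def gcd_rat_to_gcd_int
    by (simp add: of_rat_hom.map_poly_hom_smult of_rat_of_int_poly)
  with False show ?thesis
    by auto
qed simp

lemma irreducible_int_poly_eq_sign_factor: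
  fixes g r :: "int poly"
  assumes "irreducible r" and "g dvd r" and "\<not> is_unit g"
  shows "r = g \<or> r = - g"
proof -
  obtain h where h: "r = g * h"
    using assms(2) by (rule dvdE)
  then have "is_unit h"
    using assms(1,3) by (auto simp: irreducible_def)
  then obtain c where "h = [:c:]" "is_unit c"
    by (auto simp: is_unit_poly_iff)
  moreover have "c = 1 \<or> c = -1"
    using \<open>is_unit c\<close> by (auto simp: zdvd1_eq)
  ultimately show ?thesis
    using h by auto
qed

lemma irreducible_int_poly_common_root_eq:
  fixes p q :: "int poly" and a :: complex
  assumes p: "irreducible p" "poly (of_int_poly p) a = 0" "lead_coeff p > 0"
    and q: "irreducible q" "poly (of_int_poly q) a = 0" "lead_coeff q > 0"
  shows "p = q"
proof -
  have "gcd p q \<noteq> 0"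
    using p(1) by auto
  moreover have "poly (of_int_poly (gcd p q)) a = 0"
    using p(2) q(2) by (rule gcd_int_poly_common_root)
  ultimately have "\<not> is_unit (gcd p q)"
    by (auto simp: is_unit_poly_iff)
  then have "p = gcd p q \<or> p = - gcd p q" and "q = gcd p q \<or> q = - gcd p q"
    using irreducible_int_poly_eq_sign_factor p(1) q(1) by auto
  with p(3) q(3) show ?thesis
    by (metis lead_coeff_minus neg_less_0_iff_less order.asym)
qed

lemma poly_of_int_poly_normalize_eq_0_iff:
  fixes f :: "int poly" and a :: complex
  shows "poly (of_int_poly (normalize f)) a = 0 \<longleftrightarrow> poly (of_int_poly f) a = 0"
proof (cases "f = 0")
  case False
  then have "is_unit (unit_factor f)"
    by simp
  then obtain c where "unit_factor f = [:c:]" "is_unit c"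
    by (auto simp: is_unit_poly_iff)
  moreover have "poly (of_int_poly f) a
      = poly (of_int_poly (unit_factor f)) a * poly (of_int_poly (normalize f)) a"
    by (metis unit_factor_mult_normalize of_int_poly_hom.hom_mult poly_mult)
  ultimately show ?thesis
    by auto
qed simp

lemma irreducible_factor_with_root:
  fixes f :: "int poly" and a :: complex
  assumes "f \<noteq> 0" and "poly (of_int_poly f) a = 0"
  obtains q where "irreducible q" and "poly (of_int_poly q) a = 0" and "lead_coeff q > 0"
proof -
  have "poly (of_int_poly (normalize (prod_mset (prime_factorization f)))) a = 0"
    using assms(2) by (simp add: prod_mset_prime_factorization_weak[OF assms(1)] poly_of_int_poly_normalize_eq_0_iff)
  then have "poly (of_int_poly (prod_mset (prime_factorization f))) a = 0"
    by (simp only: poly_of_int_poly_normalize_eq_0_iff)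
  moreover have "\<exists>r\<in>#M. poly (of_int_poly r) a = (0 :: complex)"
    if "poly (of_int_poly (prod_mset M)) a = (0 :: complex)" for M :: "int poly multiset"
    using that by (induction M) (auto simp: of_int_poly_hom.hom_mult)
  ultimately obtain r where r: "r \<in># prime_factorization f" "poly (of_int_poly r) a = (0 :: complex)"
    by blast
  then have "irreducible r"
    by (intro prime_elem_imp_irreducible prime_imp_prime_elem) (rule in_prime_factors_imp_prime)
  then have "r \<noteq> 0" by auto
  have unit: "is_unit [:sgn (lead_coeff r):]"
    using \<open>r \<noteq> 0\<close> by (auto simp: is_unit_poly_iff sgn_if)
  show ?thesis
  proof (rule that[of "[:sgn (lead_coeff r):] * r"])
    show "irreducible ([:sgn (lead_coeff r):] * r)"
      using irreducible_mult_unit_left[OF unit] \<open>irreducible r\<close> by simp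
    show "poly (of_int_poly ([:sgn (lead_coeff r):] * r)) a = 0"
      using r(2) by (simp add: of_int_hom.map_poly_hom_smult)
    show "lead_coeff ([:sgn (lead_coeff r):] * r) > 0"
      using \<open>r \<noteq> 0\<close> by (auto simp: lead_coeff_mult sgn_if)
  qed
qed

lemma min_int_poly_root:
  fixes f :: "int poly" and a :: complex
  assumes "f \<noteq> 0" and "poly (of_int_poly f) a = 0"
  shows "min_int_poly a \<noteq> 0" and "poly (of_int_poly (min_int_poly a)) a = 0"
proof -
  obtain q where q: "irreducible q" "poly (of_int_poly q) a = 0" "lead_coeff q > 0"
    using irreducible_factor_with_root[OF assms] .
  have "irreducible (min_int_poly a) \<and> poly (of_int_poly (min_int_poly a)) a = 0 \<and> lead_coeff (min_int_poly a) > 0"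
    unfolding min_int_poly_def
    by (rule theI[of _ q]) (use q irreducible_int_poly_common_root_eq in blast)+
  then show "min_int_poly a \<noteq> 0" and "poly (of_int_poly (min_int_poly a)) a = 0"
    by auto
qed

lemma prod_linear_factors_dvd:
  fixes p :: "'a::idom poly"
  assumes "distinct as" and "\<forall>a\<in>set as. poly p a = 0"
  shows "(\<Prod>a\<leftarrow>as. [:- a, 1:]) dvd p"
  using assms
proof (induction as arbitrary: p)
  case (Cons b as)
  obtain h where h: "p = (\<Prod>a\<leftarrow>as. [:- a, 1:]) * h"
    using Cons.IH[of p] Cons.prems by (auto elim: dvdE)
  have "poly (\<Prod>a\<leftarrow>as. [:- a, 1:]) b = (\<Prod>a\<leftarrow>as. b - a)"
    by (induction as) (simp_all add: algebra_simps)
  also have "\<dots> \<noteq> 0"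
    using Cons.prems(1) by (auto simp: prod_list_zero_iff)
  finally have "poly h b = 0"
    using h Cons.prems(2) by simp
  then obtain h' where h': "h = [:- b, 1:] * h'"
    by (auto simp: poly_eq_0_iff_dvd elim: dvdE)
  have "p = (\<Prod>a\<leftarrow>b # as. [:- a, 1:]) * h'"
    unfolding h h' by (simp only: list.map prod_list.Cons mult_ac)
  then show ?case
    by (rule dvdI)
qed simp

lemma mahler_measure_ge_prod_roots:
  fixes p :: "int poly" and as :: "complex list"
  assumes "p \<noteq> 0" and "distinct as" and "\<forall>a\<in>set as. poly (of_int_poly p) a = 0"
  shows "(\<Prod>a\<leftarrow>as. max 1 (cmod a)) \<le> mahler_measure p"
proof -
  obtain h where h: "of_int_poly p = (\<Prod>a\<leftarrow>as. [:- a, 1:]) * h"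
    using prod_linear_factors_dvd[OF assms(2,3)] by (auto elim: dvdE)
  have "lead_coeff h = of_int (lead_coeff p)"
    using arg_cong[OF h, of lead_coeff] by (simp add: lead_coeff_mult map_replicate_const)
  then have "cmod (lead_coeff h) = of_int \<bar>lead_coeff p\<bar>"
    by simp
  moreover have "lead_coeff p \<noteq> 0"
    using assms(1) by simp
  ultimately have "cmod (lead_coeff h) \<ge> 1"
    by linarith
  then have "mahler_measure_poly h \<ge> 1 * 1"
    unfolding mahler_measure_poly_via_monic by (intro mult_mono mahler_measure_monic_ge_1) auto
  moreover have "mahler_measure p = (\<Prod>a\<leftarrow>as. max 1 (cmod a)) * mahler_measure_poly h"
    unfolding mahler_measure_def h measure_eq_prod
    using mahler_measure_poly_explicit[of 1 as] by simp
  moreover have "(\<Prod>a\<leftarrow>as. max 1 (cmod a)) \<ge> 0"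
    by (induction as) auto
  ultimately show ?thesis
    by (metis mult_left_mono mult_1_right mult_1)
qed

lemma norm_diff_le_max_one:
  fixes a b :: "'a::real_normed_vector"
  shows "norm (a - b) \<le> 2 * max 1 (norm a) * max 1 (norm b)"
proof -
  have "(max 1 (norm a) - 1) * (max 1 (norm b) - 1) \<ge> 0"
    by simp
  then have "max 1 (norm a) + max 1 (norm b) \<le> 2 * max 1 (norm a) * max 1 (norm b)"
    by (simp add: algebra_simps)
  moreover have "norm (a - b) \<le> norm a + norm b"
    by (rule norm_triangle_ineq4)
  ultimately show ?thesis
    by linarith
qed

text \<open>With the Mahler measure theories loaded, unqualified \<open>coprime\<close> denotes the constant of
  \<open>Unique_Factorization\<close>; the standard notion is \<open>Rings.coprime\<close>.\<close>

lemma Ints_if_square_mult_squarefree: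
  fixes r :: rat and D :: int
  assumes "squarefree D" and "r * r * of_int D \<in> \<int>"
  shows "r \<in> \<int>"
proof -
  obtain a b where r: "r = of_int a / of_int b" and "b > 0" and "Rings.coprime a b"
    by (cases r) (auto simp: Fract_of_int_quotient)
  from assms(2) obtain k where "r * r * of_int D = of_int k"
    by (auto elim: Ints_cases)
  have "of_int (a * a * D) = (r * of_int b) * (r * of_int b) * (of_int D :: rat)"
    using r \<open>b > 0\<close> by simp
  also have "\<dots> = of_int (k * (b * b))"
    using \<open>r * r * of_int D = of_int k\<close> by (simp add: algebra_simps)
  finally have "of_int (a * a * D) = (of_int (k * (b * b)) :: rat)" .
  then have "a * a * D = k * (b * b)"
    by (simp only: of_int_eq_iff)
  then have "b * b dvd (a * a) * D"
    by simp
  moreover have "Rings.coprime (b * b) (a * a)"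
    using \<open>Rings.coprime a b\<close> by (simp add: Rings.coprime_commute)
  ultimately have "b ^ 2 dvd D"
    by (simp add: coprime_dvd_mult_right_iff power2_eq_square)
  then have "is_unit b"
    using assms(1) unfolding squarefree_def by blast
  then have "b = 1"
    using \<open>b > 0\<close> by simp
  then show ?thesis using r by simp
qed

lemma squarefree_not_rat_square:
  fixes r :: rat and D :: int
  assumes "squarefree D" and "D \<noteq> 1"
  shows "r * r \<noteq> of_int D"
proof
  assume r: "r * r = of_int D"
  then have "r * r * of_int 1 \<in> \<int>"
    by simp
  then have "r \<in> \<int>"
    by (rule Ints_if_square_mult_squarefree[rotated]) simp
  then obtain k where "r = of_int k"
    by (auto elim: Ints_cases)
  with r have "k * k = D"
    by (metis of_int_eq_iff of_int_mult)
  then have "is_unit k"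
    using assms(1) unfolding squarefree_def power2_eq_square by (metis dvd_refl)
  then have "k * k = 1"
    by (metis abs_mult_self_eq mult_1_right zdvd1_eq)
  then show False
    using \<open>k * k = D\<close> assms(2) by simp
qed

lemma rat_pair_common_denominator:
  fixes Z W :: rat
  obtains n a b :: int
  where "n > 0" and "Z = of_int a / of_int n" and "W = of_int b / of_int n" and "gcd n (gcd a b) = 1"
proof -
  obtain a1 n1 where Z: "Z = of_int a1 / of_int n1" and "n1 > 0"
    by (cases Z) (auto simp: Fract_of_int_quotient)
  obtain a2 n2 where W: "W = of_int a2 / of_int n2" and "n2 > 0"
    by (cases W) (auto simp: Fract_of_int_quotient)
  define g where "g = gcd (n1 * n2) (gcd (a1 * n2) (a2 * n1))"
  have "g > 0"
    using \<open>n1 > 0\<close> \<open>n2 > 0\<close> by (simp add: g_def)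
  obtain n a b where nab: "n1 * n2 = g * n" "a1 * n2 = g * a" "a2 * n1 = g * b"
    unfolding g_def by (meson dvdE gcd_dvd1 gcd_dvd2 dvd_trans)
  have "g * gcd n (gcd a b) = gcd (g * n) (gcd (g * a) (g * b))"
    using \<open>g > 0\<close> by (simp add: gcd_mult_left)
  also have "\<dots> = g"
    unfolding nab[symmetric] by (rule g_def[symmetric])
  finally have "g * gcd n (gcd a b) = g * 1" by simp
  show ?thesis
  proof (rule that)
    show "n > 0" using nab(1) \<open>n1 > 0\<close> \<open>n2 > 0\<close> \<open>g > 0\<close> by (metis mult_pos_pos zero_less_mult_pos)
    show "gcd n (gcd a b) = 1" using \<open>g * gcd n (gcd a b) = g * 1\<close> \<open>g > 0\<close> by simp
    have "Z = of_int (a1 * n2) / of_int (n1 * n2)"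
      using \<open>n2 > 0\<close> by (simp add: Z)
    also have "\<dots> = of_int a / of_int n"
      using \<open>g > 0\<close> by (simp add: nab)
    finally show "Z = of_int a / of_int n" .
    have "W = of_int (a2 * n1) / of_int (n1 * n2)"
      using \<open>n1 > 0\<close> by (simp add: W)
    also have "\<dots> = of_int b / of_int n"
      using \<open>g > 0\<close> by (simp add: nab)
    finally show "W = of_int b / of_int n" .
  qed
qed

lemma prime_dvd_of_square_dvd_squarefree_mult:
  fixes p A X :: int
  assumes "prime p" and "squarefree A" and "p ^ 2 dvd A * X"
  shows "p dvd X"
proof (cases "p dvd A")
  case True
  then obtain A' where A: "A = p * A'" ..
  have "\<not> p dvd A'"
  proof
    assume "p dvd A'"
    then have "p ^ 2 dvd A"
      by (simp add: A power2_eq_square)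
    then have "is_unit p"
      using assms(2) unfolding squarefree_def by blast
    then show False
      using assms(1) by (simp add: not_prime_unit)
  qed
  have "p * p dvd p * (A' * X)"
    using assms(3) by (simp add: A power2_eq_square mult.assoc)
  then have "p dvd A' * X"
    using assms(1) by (simp add: prime_gt_0_int)
  with \<open>\<not> p dvd A'\<close> show ?thesis
    using assms(1) by (simp add: prime_dvd_mult_iff)
next
  case False
  have "p dvd A * X"
    by (rule dvd_trans[OF _ assms(3)]) simp
  with False show ?thesis
    using assms(1) by (simp add: prime_dvd_mult_iff)
qed

lemma prime_dvd_sum_and_twisted_form:
  fixes a b B C p :: int
  assumes "prime p" and "\<not> p dvd 2 * (B\<^sup>2 + C\<^sup>2)"
    and "p dvd a\<^sup>2 + b\<^sup>2" and "p dvd C * (a\<^sup>2 - b\<^sup>2) - 2 * B * a * b"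
  shows "p dvd a \<and> p dvd b"
proof -
  have "\<not> p dvd 2" and "\<not> p dvd B\<^sup>2 + C\<^sup>2"
    using assms(2) dvd_mult2 dvd_mult by blast+
  have "p dvd a"
  proof (rule ccontr)
    assume "\<not> p dvd a"
    have "2 * a * (C * a - B * b) = (C * (a\<^sup>2 - b\<^sup>2) - 2 * B * a * b) + C * (a\<^sup>2 + b\<^sup>2)"
      by (simp add: algebra_simps power2_eq_square)
    then have "p dvd 2 * a * (C * a - B * b)"
      using assms(3,4) by simp
    then have "p dvd C * a - B * b"
      using assms(1) \<open>\<not> p dvd 2\<close> \<open>\<not> p dvd a\<close> by (simp add: prime_dvd_mult_iff)
    moreover have "(B\<^sup>2 + C\<^sup>2) * a\<^sup>2 = B\<^sup>2 * (a\<^sup>2 + b\<^sup>2) + (C * a - B * b) * (C * a + B * b)"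
      by (simp add: algebra_simps power2_eq_square)
    ultimately have "p dvd (B\<^sup>2 + C\<^sup>2) * a\<^sup>2"
      using assms(3) by simp
    then show False
      using assms(1) \<open>\<not> p dvd B\<^sup>2 + C\<^sup>2\<close> \<open>\<not> p dvd a\<close>
      by (simp add: prime_dvd_mult_iff prime_dvd_power_iff)
  qed
  have "p dvd (a\<^sup>2 + b\<^sup>2) - a\<^sup>2"
    using assms(3) \<open>p dvd a\<close> by (intro dvd_diff) (simp_all add: power2_eq_square)
  then have "p dvd b"
    using assms(1) by (simp add: prime_dvd_power_iff)
  with \<open>p dvd a\<close> show ?thesis ..
qed

section \<open>The cyclic quartic field\<close>

lemma gen_field_least: "is_subfield_C S \<Longrightarrow> a \<in> S \<Longrightarrow> gen_field a \<subseteq> S"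
  unfolding gen_field_def by blast

lemma gen_field_self: "a \<in> gen_field a"
  unfolding gen_field_def by blast

lemma quartic_basis_mult:
  fixes s T T' a b c d :: "'a::comm_ring"
  assumes "s * s = d" and "T * T = a * (d + b * s)" and "T' * T' = a * (d - b * s)"
    and "T * T' = a * c * s" and "s * T = b * T + c * T'" and "s * T' = c * T - b * T'"
  shows "(x1 + y1 * s + z1 * T + w1 * T') * (x2 + y2 * s + z2 * T + w2 * T') =
    (x1 * x2 + d * y1 * y2 + a * d * z1 * z2 + a * d * w1 * w2)
    + (x1 * y2 + y1 * x2 + a * b * z1 * z2 - a * b * w1 * w2 + a * c * (z1 * w2 + w1 * z2)) * s
    + (x1 * z2 + z1 * x2 + b * (y1 * z2 + z1 * y2) + c * (y1 * w2 + w1 * y2)) * T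
    + (x1 * w2 + w1 * x2 + c * (y1 * z2 + z1 * y2) - b * (y1 * w2 + w1 * y2)) * T'"
proof -
  have "(x1 + y1 * s + z1 * T + w1 * T') * (x2 + y2 * s + z2 * T + w2 * T') =
    (x1 * x2 + d * y1 * y2 + a * d * z1 * z2 + a * d * w1 * w2)
    + (x1 * y2 + y1 * x2 + a * b * z1 * z2 - a * b * w1 * w2 + a * c * (z1 * w2 + w1 * z2)) * s
    + (x1 * z2 + z1 * x2 + b * (y1 * z2 + z1 * y2) + c * (y1 * w2 + w1 * y2)) * T
    + (x1 * w2 + w1 * x2 + c * (y1 * z2 + z1 * y2) - b * (y1 * w2 + w1 * y2)) * T'
    + y1 * y2 * (s * s - d) + z1 * z2 * (T * T - a * (d + b * s)) + w1 * w2 * (T' * T' - a * (d - b * s))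
    + (z1 * w2 + w1 * z2) * (T * T' - a * c * s) + (y1 * z2 + z1 * y2) * (s * T - (b * T + c * T'))
    + (y1 * w2 + w1 * y2) * (s * T' - (c * T - b * T'))"
    by (simp add: algebra_simps)
  then show ?thesis
    by (simp only: assms diff_self mult_zero_right add_0_right)
qed

type_synonym q4 = "rat \<times> rat \<times> rat \<times> rat"

locale cyclic_quartic =
  fixes A B C D :: int
  assumes A_pos: "A > 0" and B_pos: "B > 0" and C_pos: "C > 0" and D_eq: "D = B\<^sup>2 + C\<^sup>2"
    and odd_A: "odd A" and squarefree_A: "squarefree A" and squarefree_D: "squarefree D"
    and gcd_A_D: "gcd A D = 1"
begin

lemma D_pos: "D > 0"
  using B_pos by (simp add: D_eq add_pos_nonneg)

lemma not_rat_square_D: "(r :: rat) * r \<noteq> of_int D"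
proof -
  have "D \<noteq> 1"
    using B_pos C_pos by (simp add: D_eq) (smt (verit) one_le_power zero_less_power)
  then show ?thesis
    using squarefree_not_rat_square[OF squarefree_D] by blast
qed

text \<open>The form \<open>C (Z\<^sup>2 - W\<^sup>2) - 2 B Z W\<close> arises as \<open>t t' = A (C (Z\<^sup>2 - W\<^sup>2) - 2 B Z W) s\<close> for
  \<open>t = Z T + W T'\<close> and \<open>t' = - W T + Z T'\<close> (lemma \<open>T_combinations_product\<close> below).\<close>

lemma twisted_form_nonzero:
  fixes Z W :: rat
  assumes "(Z, W) \<noteq> (0, 0)"
  shows "of_int C * (Z\<^sup>2 - W\<^sup>2) - 2 * of_int B * Z * W \<noteq> 0"
proof
  assume q: "of_int C * (Z\<^sup>2 - W\<^sup>2) - 2 * of_int B * Z * W = 0"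
  have "(of_int C * Z - of_int B * W)\<^sup>2 - of_int D * W\<^sup>2
      = of_int C * (of_int C * (Z\<^sup>2 - W\<^sup>2) - 2 * of_int B * Z * W)"
    by (simp add: D_eq algebra_simps power2_eq_square)
  with q have sq: "(of_int C * Z - of_int B * W)\<^sup>2 = of_int D * W\<^sup>2"
    by simp
  show False
  proof (cases "W = 0")
    case True
    with q C_pos have "Z = 0" by simp
    with True assms show False by simp
  next
    case False
    with sq have "((of_int C * Z - of_int B * W) / W) * ((of_int C * Z - of_int B * W) / W) = of_int D"
      by (simp add: field_simps power2_eq_square)
    with not_rat_square_D show False by blast
  qed
qed

lemma prime_dvd_A_not_dvd_2D:
  assumes "prime p" and "p dvd A"
  shows "\<not> p dvd 2 * (B\<^sup>2 + C\<^sup>2)"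
proof
  assume "p dvd 2 * (B\<^sup>2 + C\<^sup>2)"
  then have "p dvd 2 \<or> p dvd D"
    unfolding D_eq using assms(1) prime_dvd_mult_iff by blast
  moreover have "\<not> p dvd 2"
  proof
    assume "p dvd 2"
    then have "p = 2"
      using zdvd_imp_le[of p 2] prime_ge_2_int[OF assms(1)] by simp
    then show False
      using assms(2) odd_A by simp
  qed
  moreover have "\<not> p dvd D"
    using assms gcd_A_D by (metis gcd_greatest is_unit_gcd not_prime_unit)
  ultimately show False by blast
qed

lemma denominator_coprime_A:
  fixes n a b :: int
  assumes "n > 0" and gcd_nab: "gcd n (gcd a b) = 1"
    and dvd_P: "n\<^sup>2 dvd A * (2 * D * (a\<^sup>2 + b\<^sup>2))"
    and dvd_Q: "n\<^sup>2 dvd A * (C * (a\<^sup>2 - b\<^sup>2) - 2 * B * a * b)"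
  shows "Rings.coprime n A"
proof (rule ccontr)
  assume "\<not> Rings.coprime n A"
  then have "\<not> is_unit (gcd n A)" and "gcd n A \<noteq> 0"
    using \<open>n > 0\<close> by (simp_all add: coprime_iff_gcd_eq_1 is_unit_gcd)
  then obtain p where "prime p" "p dvd gcd n A"
    using prime_divisor_exists by blast
  then have p: "prime p" "p dvd n" "p dvd A"
    by simp_all
  have "p\<^sup>2 dvd n\<^sup>2"
    using p(2) by simp
  then have "p dvd C * (a\<^sup>2 - b\<^sup>2) - 2 * B * a * b" and "p dvd 2 * D * (a\<^sup>2 + b\<^sup>2)"
    using dvd_Q dvd_P prime_dvd_of_square_dvd_squarefree_mult[OF p(1) squarefree_A] dvd_trans
    by blast+
  then have "p dvd a \<and> p dvd b"
    using p(1) prime_dvd_A_not_dvd_2D[OF p(1,3)] prime_dvd_sum_and_twisted_form[of p B C a b]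
    by (simp add: D_eq prime_dvd_mult_iff)
  then have "p dvd gcd n (gcd a b)"
    using p(2) by simp
  then show False
    using p(1) gcd_nab by (simp add: not_prime_unit)
qed

lemma twisted_form_in_Ints:
  fixes Z W :: rat
  defines "q \<equiv> of_int C * (Z\<^sup>2 - W\<^sup>2) - 2 * of_int B * Z * W"
  assumes sum_int: "2 * of_int A * of_int D * (Z\<^sup>2 + W\<^sup>2) \<in> \<int>"
    and prod_int: "of_int A ^ 2 * of_int D * q\<^sup>2 \<in> \<int>"
  shows "q \<in> \<int>"
proof -
  obtain n a b where n: "n > 0" and Z: "Z = of_int a / of_int n" and W: "W = of_int b / of_int n"
    and gcd_nab: "gcd n (gcd a b) = 1"
    by (rule rat_pair_common_denominator)
  define P where "P = a\<^sup>2 + b\<^sup>2"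
  define Q where "Q = C * (a\<^sup>2 - b\<^sup>2) - 2 * B * a * b"
  have "of_int n \<noteq> (0 :: rat)" using n by simp
  then have q: "q = of_int Q / of_int (n\<^sup>2)" and sum: "Z\<^sup>2 + W\<^sup>2 = of_int P / of_int (n\<^sup>2)"
    by (simp_all add: q_def Q_def P_def Z W field_simps power2_eq_square)
  have "of_int (2 * A * D * P) / of_int (n\<^sup>2) \<in> (\<int> :: rat set)"
    using sum_int by (simp add: sum)
  then have "n\<^sup>2 dvd 2 * A * D * P"
    using n by (simp only: of_int_div_of_int_in_Ints_iff) simp
  then have dvd_P: "n\<^sup>2 dvd A * (2 * D * P)"
    by (simp add: mult_ac)
  have "(of_int A * q) * (of_int A * q) * of_int D \<in> \<int>"
    using prod_int by (simp add: power2_eq_square mult_ac)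
  then have "of_int A * q \<in> \<int>"
    by (rule Ints_if_square_mult_squarefree[OF squarefree_D])
  then have "of_int (A * Q) / of_int (n\<^sup>2) \<in> (\<int> :: rat set)"
    by (simp add: q)
  then have dvd_Q: "n\<^sup>2 dvd A * Q"
    using n by (simp only: of_int_div_of_int_in_Ints_iff) simp
  have "Rings.coprime n A"
    using denominator_coprime_A[OF n gcd_nab] dvd_P dvd_Q unfolding P_def Q_def by blast
  then have "n\<^sup>2 dvd Q"
    using dvd_Q by (simp add: coprime_dvd_mult_right_iff)
  then show ?thesis
    unfolding q of_int_div_of_int_in_Ints_iff by simp
qed

definition s :: real where "s = sqrt (of_int D)"
definition T :: real where "T = sqrt (of_int A * (of_int D + of_int B * s))"
definition T' :: real where "T' = sqrt (of_int A * (of_int D - of_int B * s))"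

lemma of_int_D: "(of_int D :: real) = of_int B ^ 2 + of_int C ^ 2"
  by (simp add: D_eq)

lemma s_pos: "s > 0"
  using D_pos by (simp add: s_def)

lemma s_mult_self: "s * s = of_int D"
  using D_pos by (simp add: s_def)

lemma D_minus_B_s_pos: "of_int D - of_int B * s > 0"
proof -
  have "of_int B ^ 2 < (of_int D :: real)"
    using C_pos by (simp add: of_int_D)
  then have "of_int B < s"
    unfolding s_def using B_pos by (simp add: real_less_rsqrt)
  moreover have "of_int D - of_int B * s = s * (s - of_int B)"
    using s_mult_self by (simp add: algebra_simps)
  ultimately show ?thesis
    using s_pos by simp
qed

lemma D_plus_B_s_pos: "of_int D + of_int B * s > 0"
  using D_pos B_pos s_pos by (simp add: add_pos_pos)

lemma T_pos: "T > 0" and T'_pos: "T' > 0"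
  using A_pos D_plus_B_s_pos D_minus_B_s_pos by (simp_all add: T_def T'_def)

lemma T_mult_self: "T * T = of_int A * (of_int D + of_int B * s)"
  using A_pos D_plus_B_s_pos by (simp add: T_def)

lemma T'_mult_self: "T' * T' = of_int A * (of_int D - of_int B * s)"
  using A_pos D_minus_B_s_pos by (simp add: T'_def)

lemma T_mult_T': "T * T' = of_int A * of_int C * s"
proof -
  have "(T * T')\<^sup>2 = (T * T) * (T' * T')"
    by (simp add: power2_eq_square mult_ac)
  also have "\<dots> = of_int A ^ 2 * (of_int D * of_int D - of_int B ^ 2 * (s * s))"
    unfolding T_mult_self T'_mult_self by (simp add: algebra_simps power2_eq_square)
  also have "\<dots> = (of_int A * of_int C) ^ 2 * (s * s)"
    by (simp add: s_mult_self of_int_D algebra_simps power2_eq_square)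
  also have "\<dots> = (of_int A * of_int C * s)\<^sup>2"
    by (simp add: power2_eq_square mult_ac)
  finally show ?thesis
    using T_pos T'_pos A_pos C_pos s_pos power2_eq_iff_nonneg by simp
qed

lemma s_mult_T: "s * T = of_int B * T + of_int C * T'"
proof -
  have "(of_int B * T + of_int C * T')\<^sup>2
      = of_int B ^ 2 * (T * T) + 2 * of_int B * of_int C * (T * T') + of_int C ^ 2 * (T' * T')"
    by (simp add: power2_eq_square algebra_simps)
  also have "\<dots> = (s * s) * (T * T)"
    unfolding T_mult_self T'_mult_self T_mult_T' s_mult_self of_int_D
    by (simp add: algebra_simps power2_eq_square)
  also have "\<dots> = (s * T)\<^sup>2"
    by (simp add: power2_eq_square mult_ac)
  finally show ?thesis
    using T_pos T'_pos B_pos C_pos s_pos power2_eq_iff_nonneg by simp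
qed

lemma s_mult_T': "s * T' = of_int C * T - of_int B * T'"
proof -
  have "of_int C * (s * T') = s * (s * T) - of_int B * (s * T)"
    using s_mult_T by (simp add: algebra_simps)
  also have "\<dots> = of_int D * T - of_int B * (of_int B * T + of_int C * T')"
    unfolding s_mult_T[symmetric] by (simp add: s_mult_self flip: mult.assoc)
  also have "\<dots> = of_int C * (of_int C * T - of_int B * T')"
    unfolding of_int_D by (simp add: algebra_simps power2_eq_square)
  finally show ?thesis
    using C_pos by simp
qed

fun emb :: "q4 \<Rightarrow> real" where
  "emb (x, y, z, w) = of_rat x + of_rat y * s + of_rat z * T + of_rat w * T'"

fun qmult :: "q4 \<Rightarrow> q4 \<Rightarrow> q4" where
  "qmult (x1, y1, z1, w1) (x2, y2, z2, w2) =
    (x1 * x2 + of_int D * y1 * y2 + of_int A * of_int D * (z1 * z2 + w1 * w2),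
     x1 * y2 + y1 * x2 + of_int A * of_int B * (z1 * z2 - w1 * w2) + of_int A * of_int C * (z1 * w2 + w1 * z2),
     x1 * z2 + z1 * x2 + of_int B * (y1 * z2 + z1 * y2) + of_int C * (y1 * w2 + w1 * y2),
     x1 * w2 + w1 * x2 + of_int C * (y1 * z2 + z1 * y2) - of_int B * (y1 * w2 + w1 * y2))"

text \<open>The generator \<open>s \<mapsto> -s, T \<mapsto> T', T' \<mapsto> -T\<close> of the Galois group, in coordinates.\<close>

fun sigma :: "q4 \<Rightarrow> q4" where
  "sigma (x, y, z, w) = (x, - y, - w, z)"

lemma emb_qmult: "emb (qmult u v) = emb u * emb v"
proof -
  obtain x1 y1 z1 w1 x2 y2 z2 w2 where u: "u = (x1, y1, z1, w1)" and v: "v = (x2, y2, z2, w2)"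
    by (cases u, cases v) auto
  show ?thesis
    unfolding u v qmult.simps emb.simps
    by (subst quartic_basis_mult[OF s_mult_self T_mult_self T'_mult_self T_mult_T' s_mult_T s_mult_T'])
      (simp add: of_rat_add of_rat_diff of_rat_mult algebra_simps)
qed

lemma emb_add: "emb (u + v) = emb u + emb v"
  by (cases u; cases v) (simp add: of_rat_add algebra_simps)

lemma emb_diff: "emb (u - v) = emb u - emb v"
  by (cases u; cases v) (simp add: of_rat_diff algebra_simps)

lemma emb_uminus: "emb (- u) = - emb u"
  by (cases u) (simp add: of_rat_minus algebra_simps)

lemma emb_of_rat [simp]: "emb (r, 0, 0, 0) = of_rat r"
  by simp

lemma emb_zero [simp]: "emb 0 = 0"
  by (simp add: zero_prod_def)

lemma sigma_qmult: "sigma (qmult u v) = qmult (sigma u) (sigma v)"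
  by (cases u; cases v) (simp add: algebra_simps)

lemma s_not_rat: "s \<noteq> of_rat r"
proof
  assume "s = of_rat r"
  then have "of_rat (r * r) = (of_rat (of_int D) :: real)"
    using s_mult_self by (simp add: of_rat_mult)
  then have "r * r = of_int D"
    by (simp only: of_rat_eq_iff)
  with not_rat_square_D show False
    by blast
qed

lemma rat_combination_1_s_eq_0:
  assumes "of_rat x + of_rat y * s = 0"
  shows "x = 0 \<and> y = 0"
proof (cases "y = 0")
  case False
  then have "s = of_rat (- x / y)"
    using assms by (simp add: of_rat_divide of_rat_minus field_simps)
  with s_not_rat show ?thesis by blast
qed (use assms in simp)

definition quadratic_subfield :: "complex set" where
  "quadratic_subfield = {of_real (emb (x, y, 0, 0)) |x y. True}"

definition quartic_field :: "complex set" where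
  "quartic_field = range (\<lambda>u. of_real (emb u))"

lemma quadratic_subfieldI: "u = (x, y, 0, 0) \<Longrightarrow> of_real (emb u) \<in> quadratic_subfield"
  unfolding quadratic_subfield_def by blast

lemma inverse_emb_quadratic: "\<exists>x' y'. inverse (emb (x, y, 0, 0)) = emb (x', y', 0, 0)"
proof (cases "x = 0 \<and> y = 0")
  case True
  then show ?thesis
    by (intro exI[of _ 0]) simp
next
  case False
  define N where "N = x * x - of_int D * y * y"
  have "N \<noteq> 0"
  proof
    assume "N = 0"
    with False have "y \<noteq> 0" by (auto simp: N_def)
    with \<open>N = 0\<close> have "(x / y) * (x / y) = of_int D"
      by (simp add: N_def field_simps)
    with not_rat_square_D show False by blast
  qed
  have "x * (x / N) + of_int D * y * (- y / N) = (x * x - of_int D * y * y) / N"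
    by (simp add: diff_divide_distrib)
  also have "\<dots> = 1"
    using \<open>N \<noteq> 0\<close> unfolding N_def by simp
  finally have "qmult (x, y, 0, 0) (x / N, - y / N, 0, 0) = (1, 0, 0, 0)"
    by (simp add: algebra_simps)
  then have "emb (x, y, 0, 0) * emb (x / N, - y / N, 0, 0) = 1"
    by (metis emb_qmult emb_of_rat of_rat_1)
  then show ?thesis
    by (intro exI inverse_unique)
qed

lemma quadratic_subfield_is_subfield: "is_subfield_C quadratic_subfield"
  unfolding is_subfield_C_def
proof (intro conjI ballI)
  show "0 \<in> quadratic_subfield" "1 \<in> quadratic_subfield"
    using quadratic_subfieldI[of "(0, 0, 0, 0)"] quadratic_subfieldI[of "(1, 0, 0, 0)"] by simp_all
next
  fix a b assume "a \<in> quadratic_subfield" "b \<in> quadratic_subfield"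
  then obtain x1 y1 x2 y2 where a: "a = of_real (emb (x1, y1, 0, 0))" and b: "b = of_real (emb (x2, y2, 0, 0))"
    unfolding quadratic_subfield_def by blast
  show "a + b \<in> quadratic_subfield"
    unfolding a b of_real_add[symmetric] emb_add[symmetric] by (rule quadratic_subfieldI) simp
  show "a * b \<in> quadratic_subfield"
    unfolding a b of_real_mult[symmetric] emb_qmult[symmetric] by (rule quadratic_subfieldI) simp
next
  fix a assume "a \<in> quadratic_subfield"
  then obtain x y where a: "a = of_real (emb (x, y, 0, 0))"
    unfolding quadratic_subfield_def by blast
  show "- a \<in> quadratic_subfield"
    unfolding a of_real_minus[symmetric] emb_uminus[symmetric] by (rule quadratic_subfieldI) simp
  obtain x' y' where "inverse (emb (x, y, 0, 0)) = emb (x', y', 0, 0)"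
    using inverse_emb_quadratic by blast
  then have "inverse a = of_real (emb (x', y', 0, 0))"
    unfolding a of_real_inverse[symmetric] by (rule arg_cong)
  then show "inverse a \<in> quadratic_subfield"
    unfolding quadratic_subfield_def by blast
qed

lemma T_notin_quadratic_subfield: "of_real T \<notin> quadratic_subfield"
proof
  assume "of_real T \<in> quadratic_subfield"
  then obtain a b where "of_real T = (of_real (emb (a, b, 0, 0)) :: complex)"
    unfolding quadratic_subfield_def by blast
  then have "T = emb (a, b, 0, 0)"
    by (simp only: of_real_eq_iff)
  then have "T * T = emb (qmult (a, b, 0, 0) (a, b, 0, 0))"
    by (simp only: emb_qmult)
  then have "of_rat (a * a + b * b * of_int D - of_int A * of_int D)
      + of_rat (2 * a * b - of_int A * of_int B) * s = 0"
    unfolding T_mult_self by (simp add: of_rat_add of_rat_diff of_rat_mult algebra_simps)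
  then have "a * a + b * b * of_int D - of_int A * of_int D = 0 \<and> 2 * a * b - of_int A * of_int B = 0"
    by (rule rat_combination_1_s_eq_0)
  then have sum: "a * a + b * b * of_int D = of_int A * of_int D" and prod: "2 * a * b = of_int A * of_int B"
    by simp_all
  have "(a * a - b * b * of_int D)\<^sup>2 = (a * a + b * b * of_int D)\<^sup>2 - (2 * a * b)\<^sup>2 * of_int D"
    by (simp add: power2_eq_square algebra_simps)
  also have "\<dots> = (of_int A * of_int C)\<^sup>2 * of_int D"
    unfolding sum prod by (simp add: D_eq power2_eq_square algebra_simps)
  finally have "((a * a - b * b * of_int D) / (of_int A * of_int C))
      * ((a * a - b * b * of_int D) / (of_int A * of_int C)) = of_int D"
    using A_pos C_pos by (simp add: field_simps power2_eq_square)
  with not_rat_square_D show False by blast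
qed

lemma quadratic_combination_T_eq_0:
  assumes "emb (a, b, 0, 0) + emb (c, d, 0, 0) * T = 0"
  shows "c = 0 \<and> d = 0"
proof (rule ccontr)
  let ?X = "of_real (emb (a, b, 0, 0)) :: complex"
  let ?Y = "of_real (emb (c, d, 0, 0)) :: complex"
  assume "\<not> (c = 0 \<and> d = 0)"
  then have "emb (c, d, 0, 0) \<noteq> 0"
    using rat_combination_1_s_eq_0 by auto
  then have "of_real T = - ?X * inverse ?Y"
    using assms by (simp add: field_simps flip: of_real_mult of_real_add del: emb.simps)
  moreover have "?X \<in> quadratic_subfield" "?Y \<in> quadratic_subfield"
    unfolding quadratic_subfield_def by blast+
  ultimately have "of_real T \<in> quadratic_subfield"
    using quadratic_subfield_is_subfield unfolding is_subfield_C_def by metis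
  with T_notin_quadratic_subfield show False ..
qed

lemma C_mult_emb:
  "of_int C * emb (x, y, z, w)
    = emb (of_int C * x, of_int C * y, 0, 0) + emb (of_int C * z - of_int B * w, w, 0, 0) * T"
proof -
  have CT': "of_int C * T' = s * T - of_int B * T"
    using s_mult_T by simp
  have "of_int C * emb (x, y, z, w)
      = of_rat (of_int C * x) + of_rat (of_int C * y) * s + of_rat (of_int C * z) * T + of_rat w * (of_int C * T')"
    by (simp add: of_rat_mult algebra_simps)
  also have "\<dots> = emb (of_int C * x, of_int C * y, 0, 0) + emb (of_int C * z - of_int B * w, w, 0, 0) * T"
    unfolding CT' by (simp add: of_rat_diff of_rat_mult algebra_simps)
  finally show ?thesis .
qed

lemma emb_eq_0_iff [simp]: "emb u = 0 \<longleftrightarrow> u = 0"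
proof
  assume "emb u = 0"
  obtain x y z w where u: "u = (x, y, z, w)"
    by (cases u) auto
  have decomp: "emb (of_int C * x, of_int C * y, 0, 0) + emb (of_int C * z - of_int B * w, w, 0, 0) * T = 0"
    using C_mult_emb[of x y z w] \<open>emb u = 0\<close> by (simp add: u del: emb.simps)
  then have "of_int C * z - of_int B * w = 0 \<and> w = 0"
    by (rule quadratic_combination_T_eq_0)
  then have "w = 0" "z = 0"
    using C_pos by auto
  moreover have "x = 0" "y = 0"
    using decomp rat_combination_1_s_eq_0[of "of_int C * x" "of_int C * y"] C_pos \<open>w = 0\<close> \<open>z = 0\<close>
    by simp_all
  ultimately show "u = 0"
    by (simp add: u zero_prod_def)
qed simp

lemma emb_inj: "emb u = emb v \<longleftrightarrow> u = v"
  using emb_eq_0_iff[of "u - v"] by (simp add: emb_diff)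

lemma inverse_emb: "\<exists>v. inverse (emb u) = emb v"
proof -
  obtain x y z w where u: "u = (x, y, z, w)"
    by (cases u) auto
  define u' where "u' = (x, y, - z, - w)"
  have "snd (snd (qmult u u')) = (0, 0)"
    by (simp add: u u'_def algebra_simps)
  then obtain p0 p1 where norm: "qmult u u' = (p0, p1, 0, 0)"
    by (metis prod.collapse)
  obtain v where v: "inverse (emb (p0, p1, 0, 0)) = emb v"
    using inverse_emb_quadratic by blast
  have "u' = 0 \<longleftrightarrow> u = 0"
    by (auto simp: u u'_def zero_prod_def)
  then have "inverse (emb u) = emb u' * inverse (emb u * emb u')"
    by (cases "u = 0") (simp_all add: field_simps del: emb.simps)
  also have "\<dots> = emb (qmult u' v)"
    by (simp only: emb_qmult norm[symmetric] v[symmetric])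
  finally show ?thesis ..
qed

lemma quartic_field_is_subfield: "is_subfield_C quartic_field"
  unfolding is_subfield_C_def
proof (intro conjI ballI)
  show "0 \<in> quartic_field"
    unfolding quartic_field_def by (rule range_eqI[of _ _ 0]) simp
  show "1 \<in> quartic_field"
    unfolding quartic_field_def by (rule range_eqI[of _ _ "(1, 0, 0, 0)"]) simp
next
  fix a b assume "a \<in> quartic_field" "b \<in> quartic_field"
  then obtain u v where a: "a = of_real (emb u)" and b: "b = of_real (emb v)"
    unfolding quartic_field_def by blast
  show "a + b \<in> quartic_field"
    unfolding quartic_field_def a b of_real_add[symmetric] emb_add[symmetric] by (rule rangeI)
  show "a * b \<in> quartic_field"
    unfolding quartic_field_def a b of_real_mult[symmetric] emb_qmult[symmetric] by (rule rangeI)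
next
  fix a assume "a \<in> quartic_field"
  then obtain u where a: "a = of_real (emb u)"
    unfolding quartic_field_def by blast
  show "- a \<in> quartic_field"
    unfolding quartic_field_def a of_real_minus[symmetric] emb_uminus[symmetric] by (rule rangeI)
  obtain v where "inverse (emb u) = emb v"
    using inverse_emb by blast
  then have "inverse a = of_real (emb v)"
    unfolding a of_real_inverse[symmetric] by (rule arg_cong)
  then show "inverse a \<in> quartic_field"
    unfolding quartic_field_def by blast
qed

lemma sigma_add: "sigma (u + v) = sigma u + sigma v"
  by (cases u; cases v) simp

lemma emb_sigma_poly:
  "\<exists>v. emb v = poly (of_int_poly f) (emb u) \<and> emb (sigma v) = poly (of_int_poly f) (emb (sigma u))"
proof (induction f rule: pCons_induct)
  case 0
  show ?case by (intro exI[of _ 0]) (simp add: zero_prod_def)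
next
  case (pCons c f)
  then obtain v where v: "emb v = poly (of_int_poly f) (emb u)"
    "emb (sigma v) = poly (of_int_poly f) (emb (sigma u))" by blast
  have "sigma ((of_int c, 0, 0, 0) + qmult u v) = (of_int c, 0, 0, 0) + qmult (sigma u) (sigma v)"
    by (simp add: sigma_add sigma_qmult)
  then show ?case
    using pCons.hyps v
    by (intro exI[of _ "(of_int c, 0, 0, 0) + qmult u v"]) (simp add: emb_add emb_qmult map_poly_pCons)
qed

lemma poly_emb_sigma_eq_0:
  assumes "poly (of_int_poly f) (emb u) = 0"
  shows "poly (of_int_poly f) (emb (sigma u)) = 0"
proof -
  obtain v where "emb v = poly (of_int_poly f) (emb u)" "emb (sigma v) = poly (of_int_poly f) (emb (sigma u))"
    using emb_sigma_poly by blast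
  with assms show ?thesis
    by (simp add: zero_prod_def)
qed

lemma algebraic_int_emb_sigma:
  assumes "algebraic_int (emb u)"
  shows "algebraic_int (emb (sigma u))"
  using assms poly_emb_sigma_eq_0 unfolding algebraic_int_altdef_ipoly by blast

lemma algebraic_int_T: "algebraic_int T"
proof -
  have "(T * T - of_int A * of_int D)\<^sup>2 = of_int A ^ 2 * of_int B ^ 2 * of_int D"
    unfolding T_mult_self using s_mult_self by (simp add: power2_eq_square algebra_simps)
  then have "poly (of_int_poly [:A\<^sup>2 * D\<^sup>2 - A\<^sup>2 * B\<^sup>2 * D, 0, - 2 * A * D, 0, 1:]) T = 0"
    by (simp add: algebra_simps power2_eq_square)
  then show ?thesis
    unfolding algebraic_int_altdef_ipoly by (intro exI[of _ "[:A\<^sup>2 * D\<^sup>2 - A\<^sup>2 * B\<^sup>2 * D, 0, - 2 * A * D, 0, 1:]"]) simp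
qed

lemma conjugate_differences:
  "emb (x, y, z, w) - emb (x, y, - z, - w) = of_rat (2 * z) * T + of_rat (2 * w) * T'"
  "emb (x, - y, - w, z) - emb (x, - y, w, - z) = - of_rat (2 * w) * T + of_rat (2 * z) * T'"
  by (simp_all add: of_rat_mult of_rat_minus algebra_simps)

lemma T_combinations_sum_squares:
  "(of_rat Z * T + of_rat W * T') * (of_rat Z * T + of_rat W * T')
    + (- of_rat W * T + of_rat Z * T') * (- of_rat W * T + of_rat Z * T')
    = of_rat (2 * of_int A * of_int D * (Z\<^sup>2 + W\<^sup>2))"
proof -
  have "(of_rat Z * T + of_rat W * T') * (of_rat Z * T + of_rat W * T')
      + (- of_rat W * T + of_rat Z * T') * (- of_rat W * T + of_rat Z * T')
      = (of_rat Z ^ 2 + of_rat W ^ 2) * (T * T + T' * T')"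
    by (simp add: algebra_simps power2_eq_square)
  also have "\<dots> = of_rat (2 * of_int A * of_int D * (Z\<^sup>2 + W\<^sup>2))"
    unfolding T_mult_self T'_mult_self by (simp add: of_rat_mult of_rat_add of_rat_power algebra_simps)
  finally show ?thesis .
qed

lemma T_combinations_product:
  "(of_rat Z * T + of_rat W * T') * (- of_rat W * T + of_rat Z * T')
    = of_int A * of_rat (of_int C * (Z\<^sup>2 - W\<^sup>2) - 2 * of_int B * Z * W) * s"
proof -
  have "(of_rat Z * T + of_rat W * T') * (- of_rat W * T + of_rat Z * T')
      = of_rat Z * of_rat W * (T' * T' - T * T) + (of_rat Z ^ 2 - of_rat W ^ 2) * (T * T')"
    by (simp add: algebra_simps power2_eq_square)
  also have "\<dots> = of_int A * of_rat (of_int C * (Z\<^sup>2 - W\<^sup>2) - 2 * of_int B * Z * W) * s"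
    unfolding T_mult_self T'_mult_self T_mult_T'
    by (simp add: of_rat_mult of_rat_add of_rat_diff of_rat_power algebra_simps)
  finally show ?thesis .
qed

lemma twisted_form_of_conjugates_in_Ints:
  assumes alg: "algebraic_int (emb (x, y, z, w))"
  shows "of_int C * ((2 * z)\<^sup>2 - (2 * w)\<^sup>2) - 2 * of_int B * (2 * z) * (2 * w) \<in> \<int>"
proof -
  define q where "q = of_int C * ((2 * z)\<^sup>2 - (2 * w)\<^sup>2) - 2 * of_int B * (2 * z) * (2 * w)"
  define t where "t = emb (x, y, z, w) - emb (x, y, - z, - w)"
  define t' where "t' = emb (x, - y, - w, z) - emb (x, - y, w, - z)"
  have "algebraic_int (emb (sigma (x, y, z, w)))"
    "algebraic_int (emb (sigma (sigma (x, y, z, w))))"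
    "algebraic_int (emb (sigma (sigma (sigma (x, y, z, w)))))"
    using alg algebraic_int_emb_sigma by blast+
  then have t_int: "algebraic_int t" and t'_int: "algebraic_int t'"
    unfolding t_def t'_def using alg by (simp_all add: algebraic_int_diff del: emb.simps)
  have "t * t + t' * t' = of_rat (2 * of_int A * of_int D * ((2 * z)\<^sup>2 + (2 * w)\<^sup>2))"
    unfolding t_def t'_def conjugate_differences by (rule T_combinations_sum_squares)
  then have "2 * of_int A * of_int D * ((2 * z)\<^sup>2 + (2 * w)\<^sup>2) \<in> \<int>"
    using t_int t'_int by (metis Ints_if_algebraic_int_of_rat algebraic_int_plus algebraic_int_times)
  moreover have "t * t' = of_int A * of_rat q * s"
    unfolding t_def t'_def conjugate_differences q_def by (rule T_combinations_product)
  then have "(t * t') * (t * t') = of_rat (of_int A ^ 2 * of_int D * q\<^sup>2)"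
    using s_mult_self by (simp add: of_rat_mult of_rat_power algebra_simps power2_eq_square)
  then have "of_int A ^ 2 * of_int D * q\<^sup>2 \<in> \<int>"
    using t_int t'_int by (metis Ints_if_algebraic_int_of_rat algebraic_int_times)
  ultimately show ?thesis
    using twisted_form_in_Ints unfolding q_def by blast
qed

lemma conjugate_differences_product_ge:
  assumes alg: "algebraic_int (emb (x, y, z, w))" and "(z, w) \<noteq> (0, 0)"
  shows "of_int A * s \<le> \<bar>emb (x, y, z, w) - emb (x, y, - z, - w)\<bar> * \<bar>emb (x, - y, - w, z) - emb (x, - y, w, - z)\<bar>"
proof -
  define q where "q = of_int C * ((2 * z)\<^sup>2 - (2 * w)\<^sup>2) - 2 * of_int B * (2 * z) * (2 * w)"
  have "q \<in> \<int>"
    unfolding q_def by (rule twisted_form_of_conjugates_in_Ints[OF alg])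
  moreover have "q \<noteq> 0"
    using twisted_form_nonzero[of "2 * z" "2 * w"] assms(2) unfolding q_def by simp
  ultimately obtain k where k: "q = of_int k" "k \<noteq> 0"
    by (auto elim: Ints_cases)
  have "of_int A * s = of_int A * 1 * s"
    by simp
  also have "\<dots> \<le> of_int A * of_int \<bar>k\<bar> * s"
    using A_pos s_pos k(2) by (intro mult_right_mono mult_left_mono) simp_all
  also have "\<dots> = \<bar>(emb (x, y, z, w) - emb (x, y, - z, - w)) * (emb (x, - y, - w, z) - emb (x, - y, w, - z))\<bar>"
    unfolding conjugate_differences T_combinations_product q_def[symmetric] k(1)
    using A_pos s_pos by (simp add: abs_mult)
  finally show ?thesis
    by (simp only: abs_mult)
qed

lemma mahler_measure_ge_A_s:
  assumes alg: "algebraic_int (emb (x, y, z, w))" and zw: "(z, w) \<noteq> (0, 0)"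
    and "p \<noteq> 0" and root: "poly (of_int_poly p) (of_real (emb (x, y, z, w)) :: complex) = 0"
  shows "of_int A * s / 4 \<le> mahler_measure p"
proof -
  define u1 u2 u3 u4 where "u1 = (x, y, z, w)" and "u2 = (x, - y, - w, z)"
    and "u3 = (x, y, - z, - w)" and "u4 = (x, - y, w, - z)"
  define M where "M u = max 1 \<bar>emb u\<bar>" for u
  have "poly (of_int_poly p) (emb u1) = 0"
    using root unfolding u1_def poly_of_int_poly_of_real of_real_eq_0_iff .
  then have "poly (of_int_poly p) (emb (sigma u1)) = 0"
    "poly (of_int_poly p) (emb (sigma (sigma u1))) = 0"
    "poly (of_int_poly p) (emb (sigma (sigma (sigma u1)))) = 0"
    using poly_emb_sigma_eq_0 by blast+
  then have roots: "\<forall>a\<in>set (map (\<lambda>u. of_real (emb u)) [u1, u2, u3, u4]). poly (of_int_poly p) a = (0 :: complex)"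
    using \<open>poly (of_int_poly p) (emb u1) = 0\<close>
    by (simp add: u1_def u2_def u3_def u4_def poly_of_int_poly_of_real del: emb.simps)
  have "distinct (map (\<lambda>u. of_real (emb u) :: complex) [u1, u2, u3, u4])"
    using zw by (auto simp: u1_def u2_def u3_def u4_def emb_inj simp del: emb.simps)
  from mahler_measure_ge_prod_roots[OF \<open>p \<noteq> 0\<close> this roots]
  have roots_bound: "M u1 * (M u2 * (M u3 * M u4)) \<le> mahler_measure p"
    by (simp add: M_def del: emb.simps)
  have diff13: "\<bar>emb u1 - emb u3\<bar> \<le> 2 * M u1 * M u3"
    using norm_diff_le_max_one[of "emb u1" "emb u3"] by (simp add: M_def del: emb.simps)
  have diff24: "\<bar>emb u2 - emb u4\<bar> \<le> 2 * M u2 * M u4"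
    using norm_diff_le_max_one[of "emb u2" "emb u4"] by (simp add: M_def del: emb.simps)
  have "of_int A * s \<le> \<bar>emb u1 - emb u3\<bar> * \<bar>emb u2 - emb u4\<bar>"
    unfolding u1_def u2_def u3_def u4_def by (rule conjugate_differences_product_ge[OF alg zw])
  also have "\<dots> \<le> (2 * M u1 * M u3) * (2 * M u2 * M u4)"
    using diff13 diff24 by (intro mult_mono) auto
  also have "\<dots> = 4 * (M u1 * (M u2 * (M u3 * M u4)))"
    by (simp add: algebra_simps)
  also have "\<dots> \<le> 4 * mahler_measure p"
    using roots_bound by simp
  finally show ?thesis
    by simp
qed

lemma gen_field_T_subset: "gen_field (of_real T) \<subseteq> quartic_field"
proof (rule gen_field_least[OF quartic_field_is_subfield])
  show "of_real T \<in> quartic_field"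
    unfolding quartic_field_def by (rule range_eqI[of _ _ "(0, 0, 1, 0)"]) simp
qed

lemma T_in_ring_of_integers: "of_real T \<in> ring_of_integers (gen_field (of_real T))"
  unfolding ring_of_integers_def using gen_field_self algebraic_int_T by simp

lemma mahler_measure_alg_generator_ge:
  assumes a: "a \<in> ring_of_integers (gen_field (of_real T))" and gen: "gen_field a = gen_field (of_real T)"
  shows "of_int A * s / 4 \<le> mahler_measure_alg a"
proof -
  obtain x y z w where a_eq: "a = of_real (emb (x, y, z, w))"
    using a gen_field_T_subset unfolding ring_of_integers_def quartic_field_def by auto
  have alg: "algebraic_int (emb (x, y, z, w))"
    using a unfolding ring_of_integers_def a_eq by (simp del: emb.simps)
  have "(z, w) \<noteq> (0, 0)"
  proof
    assume "(z, w) = (0, 0)"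
    then have "a \<in> quadratic_subfield"
      unfolding a_eq by (intro quadratic_subfieldI) simp
    then have "gen_field a \<subseteq> quadratic_subfield"
      by (rule gen_field_least[OF quadratic_subfield_is_subfield])
    then show False
      using gen gen_field_self T_notin_quadratic_subfield by blast
  qed
  moreover obtain f where f: "poly (of_int_poly f) a = 0" "lead_coeff f = 1"
    using a unfolding ring_of_integers_def algebraic_int_altdef_ipoly by blast
  then have "f \<noteq> 0"
    by auto
  then have "min_int_poly a \<noteq> 0" "poly (of_int_poly (min_int_poly a)) a = 0"
    using min_int_poly_root f by blast+
  ultimately show ?thesis
    unfolding mahler_measure_alg_def using mahler_measure_ge_A_s[OF alg] a_eq by blast
qed

end

theorem proposition5p1:
  fixes A B C D :: int
  assumes "A > 0" and "odd A" and "squarefree A"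
    and "B > 0" and "C > 0"
    and "D = B^2 + C^2" and "squarefree D"
    and "gcd A D = 1"
  shows "A * sqrt D / 48 \<le>
    mahler_measure_OK (gen_field (complex_of_real (sqrt (A * (D + B * sqrt D)))))"
proof -
  interpret cyclic_quartic A B C D
    using assms by unfold_locales auto
  have "of_int A * s / 4 \<le> mahler_measure_OK (gen_field (of_real T))"
    unfolding mahler_measure_OK_def
    by (rule cInf_greatest) (use T_in_ring_of_integers mahler_measure_alg_generator_ge in auto)
  moreover have "of_int A * s / 48 \<le> of_int A * s / 4"
    using A_pos s_pos by simp
  ultimately show ?thesis
    by (simp add: T_def s_def)
qed

end
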